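(* Let $M\in\{0,1\}^{n\times n}$ have at least one $1$ entry, let $A$ be its symmetrization with eigenvalues $\lambda_1\geq\dots\geq\lambda_{2n}$, and let $\Delta$ be the maximum number of $1$ entries in a row or a column of $M$. Then $$\operatorname{pdisc}(M)\geq \frac{1}{\Delta}\sum_{i=2}^{n}\lambda_i^3.$$
   Context: Let $N=2n$, $p=|M|/n^2$ where $|M|$ is the number of $1$ entries. The symmetrization of $M$ is the symmetric matrix $A\in\mathbb{R}^{N\times N}$ with $A_{i,j+n}=A_{j+n,i}=M_{i,j}$ for $(i,j)\in[n]\times[n]$ and all other entries $0$. $L\in\mathbb{R}^{N\times N}$ is the adjacency matrix of the complete bipartite graph with parts $[n]$ and $[n+1,N]$. For $X\in\mathbb{R}^{N\times N}$, $\operatorname{disc}(X)=\langle X,A\rangle-p\langle X,L\rangle$ (entrywise inner product), and $\operatorname{pdisc}(M)=\max\{\operatorname{disc}(X): X\text{ symmetric positive semidefinite},\ X_{i,i}\leq1\ \forall i\}$. *)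

theory Defs
  imports "Jordan_Normal_Form.Matrix" "Jordan_Normal_Form.Char_Poly"
    "HOL-Computational_Algebra.Polynomial"
begin

text \<open>Indices are 0-based: the row index i of M (i < n) becomes vertex i of A,
  the column index j of M (j < n) becomes vertex j + n of A; N = 2n.\<close>

definition zero_one_mat :: "nat \<Rightarrow> real mat \<Rightarrow> bool" where
  "zero_one_mat n M \<longleftrightarrow> M \<in> carrier_mat n n \<and>
     (\<forall>i<n. \<forall>j<n. M $$ (i,j) = 0 \<or> M $$ (i,j) = 1)"

definition num_ones :: "nat \<Rightarrow> real mat \<Rightarrow> nat" where
  "num_ones n M = card {(i,j). i < n \<and> j < n \<and> M $$ (i,j) = 1}"

definition density :: "nat \<Rightarrow> real mat \<Rightarrow> real" where
  "density n M = real (num_ones n M) / (real n)^2"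

definition symmetrization :: "nat \<Rightarrow> real mat \<Rightarrow> real mat" where
  "symmetrization n M = mat (2*n) (2*n) (\<lambda>(i,j).
      if i < n \<and> n \<le> j then M $$ (i, j - n)
      else if j < n \<and> n \<le> i then M $$ (j, i - n)
      else 0)"

definition bip_complete :: "nat \<Rightarrow> real mat" where
  "bip_complete n = mat (2*n) (2*n) (\<lambda>(i,j).
      if (i < n \<and> n \<le> j) \<or> (j < n \<and> n \<le> i) then 1 else 0)"

definition entry_inner :: "nat \<Rightarrow> real mat \<Rightarrow> real mat \<Rightarrow> real" where
  "entry_inner N X Y = (\<Sum>i<N. \<Sum>j<N. X $$ (i,j) * Y $$ (i,j))"

definition disc :: "nat \<Rightarrow> real mat \<Rightarrow> real mat \<Rightarrow> real" where
  "disc n M X = entry_inner (2*n) X (symmetrization n M)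
                - density n M * entry_inner (2*n) X (bip_complete n)"

definition psd :: "nat \<Rightarrow> real mat \<Rightarrow> bool" where
  "psd N X \<longleftrightarrow> X \<in> carrier_mat N N \<and> transpose_mat X = X \<and>
     (\<forall>v \<in> carrier_vec N. v \<bullet> (X *\<^sub>v v) \<ge> 0)"

definition pdisc :: "nat \<Rightarrow> real mat \<Rightarrow> real" where
  "pdisc n M = Sup {disc n M X | X. psd (2*n) X \<and> (\<forall>i < 2*n. X $$ (i,i) \<le> 1)}"

definition max_degree :: "nat \<Rightarrow> real mat \<Rightarrow> nat" where
  "max_degree n M = Max ({card {j. j < n \<and> M $$ (i,j) = 1} | i. i < n}
                      \<union> {card {i. i < n \<and> M $$ (i,j) = 1} | j. j < n})"

text \<open>Eigenvalues with multiplicity (roots of the characteristic polynomial), in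
  non-increasing order; for a real symmetric matrix all eigenvalues are real.\<close>
definition eigenvalues_desc :: "real mat \<Rightarrow> real list" where
  "eigenvalues_desc A = rev (sorted_list_of_multiset (proots (char_poly A)))"

end

(*
  Write the symmetrization as A = sum_k l_k v_k v_k^T with orthonormal eigenvectors v_k and
  eigenvalues l_0 >= l_1 >= ... >= l_(2n-1), and let B = sum_(k<n) l_k^2 v_k v_k^T be the part of
  A^2 on the top n eigenvectors. The test matrix is

    X = (B - (B 1)(B 1)^T / (1^T B 1)) / Delta,

  B with the direction of the all-ones vector 1 projected out in the inner product given by B.
  By Cauchy-Schwarz X is positive semidefinite with 1^T X 1 = 0; since L = (1 1^T - b b^T) / 2
  for the +-1 vector b of the bipartition, <X, L> <= 0 and hence disc X >= <X, A>. The diagonal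
  of X is at most (A^2)_ii / Delta <= 1. Finally <X, A> = (sum_(k<n) l_k^3 - w) / Delta, where w
  is an average of the l_k^3 (k < n) with weights (l_k <v_k, 1>)^2, so w <= l_0^3; and l_0 >= 0
  because A has trace 0.
*)

theory Submission
  imports Defs "Jordan_Normal_Form.Schur_Decomposition" "HOL-Combinatorics.Permutations" "HOL-Analysis.Convex"
begin

(* The inner-product notation of HOL-Analysis would clash with the scalar product of vectors. *)
unbundle no inner_syntax

section \<open>Spectral theorem for real symmetric matrices\<close>

lemma block_diag_mult:
  assumes "A1 \<in> carrier_mat n1 n1" "B1 \<in> carrier_mat n1 n1" "A2 \<in> carrier_mat n2 n2" "B2 \<in> carrier_mat n2 n2"
  shows "four_block_mat A1 (0\<^sub>m n1 n2) (0\<^sub>m n2 n1) A2 * four_block_mat B1 (0\<^sub>m n1 n2) (0\<^sub>m n2 n1) B2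
    = four_block_mat (A1 * B1) (0\<^sub>m n1 n2) (0\<^sub>m n2 n1) (A2 * B2)"
  using assms by (subst mult_four_block_mat[of _ n1 n1 _ n2 _ n2]) auto

lemma block_diag_transpose:
  assumes "A1 \<in> carrier_mat n1 n1" "A2 \<in> carrier_mat n2 n2"
  shows "(four_block_mat A1 (0\<^sub>m n1 n2) (0\<^sub>m n2 n1) A2)\<^sup>T = four_block_mat A1\<^sup>T (0\<^sub>m n1 n2) (0\<^sub>m n2 n1) A2\<^sup>T"
  using assms by (subst transpose_four_block_mat) auto

lemma mat_diag_Suc:
  fixes e :: "'a :: semiring_1"
  shows "mat_diag (Suc m) (case_nat e l) = four_block_mat (e \<cdot>\<^sub>m 1\<^sub>m 1) (0\<^sub>m 1 m) (0\<^sub>m m 1) (mat_diag m l)"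
  by (rule eq_matI) (auto simp: mat_diag_def split: nat.split)

lemma real_symmetric_complex_eigenvalue_real:
  fixes A :: "real mat"
  assumes A: "A \<in> carrier_mat N N" and sym: "A\<^sup>T = A"
    and ev: "eigenvector (map_mat complex_of_real A) v a"
  shows "cnj a = a"
proof -
  have v: "v \<in> carrier_vec N" and v0: "v \<noteq> 0\<^sub>v N"
    and Av: "map_mat complex_of_real A *\<^sub>v v = a \<cdot>\<^sub>v v"
    using ev A unfolding eigenvector_def by auto
  have symA: "A $$ (j, i) = A $$ (i, j)" if "i < N" "j < N" for i j
    using sym A that by (metis carrier_matD index_transpose_mat(1))
  \<comment> \<open>\<open>q = v\<^sup>* A v\<close> equals its own conjugate and \<open>a \<parallel>v\<parallel>\<^sup>2\<close>\<close>
  define q where "q = (\<Sum>i<N. \<Sum>j<N. cnj (v $ i) * of_real (A $$ (i, j)) * v $ j)"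
  define r where "r = (\<Sum>i<N. (cmod (v $ i))\<^sup>2)"
  have q_eigen: "q = a * of_real r"
  proof -
    have "q = (\<Sum>i<N. cnj (v $ i) * (map_mat complex_of_real A *\<^sub>v v) $ i)"
      unfolding q_def using v A
      by (auto simp: mult_mat_vec_def scalar_prod_def sum_distrib_left mult.assoc intro!: sum.cong)
    also have "\<dots> = a * (\<Sum>i<N. cnj (v $ i) * v $ i)"
      unfolding Av using v by (simp add: sum_distrib_left mult_ac)
    finally show ?thesis
      unfolding r_def of_real_sum by (simp add: complex_norm_square mult.commute del: of_real_power)
  qed
  have "cnj q = (\<Sum>j<N. \<Sum>i<N. v $ i * of_real (A $$ (i, j)) * cnj (v $ j))"
    unfolding q_def cnj_sum by (subst sum.swap) simp
  also have "\<dots> = q"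
    unfolding q_def by (intro sum.cong refl) (simp add: symA mult_ac)
  finally have "cnj q = q" .
  moreover have "r \<noteq> 0"
  proof
    assume "r = 0"
    then have "\<forall>i<N. v $ i = 0"
      unfolding r_def by (subst (asm) sum_nonneg_eq_0_iff) auto
    then have "v = 0\<^sub>v N"
      using v by auto
    then show False
      using v0 by simp
  qed
  ultimately show "cnj a = a"
    unfolding q_eigen by simp
qed

lemma real_symmetric_has_eigenvalue:
  fixes A :: "real mat"
  assumes A: "A \<in> carrier_mat N N" and sym: "A\<^sup>T = A" and "0 < N"
  shows "\<exists>e. eigenvalue A e"
proof -
  let ?Ac = "map_mat complex_of_real A"
  have Ac: "?Ac \<in> carrier_mat N N" using A by simp
  obtain as where as: "char_poly ?Ac = (\<Prod>a\<leftarrow>as. [:- a, 1:])" "length as = N"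
    using char_poly_factorized[OF Ac] by blast
  then obtain a where root: "poly (char_poly ?Ac) a = 0"
    using \<open>0 < N\<close> by (cases as) auto
  then obtain v where "eigenvector ?Ac v a"
    using eigenvalue_root_char_poly[OF Ac] unfolding eigenvalue_def by blast
  then have "cnj a = a"
    by (rule real_symmetric_complex_eigenvalue_real[OF A sym])
  then have "a = of_real (Re a)"
    by (simp add: complex_eq_iff)
  moreover have "of_real (poly (char_poly A) (Re a)) = poly (char_poly ?Ac) (of_real (Re a))"
    by (simp add: of_real_hom.char_poly_hom[OF A])
  ultimately have "poly (char_poly A) (Re a) = 0"
    using root by simp
  then show ?thesis
    using eigenvalue_root_char_poly[OF A] by auto
qed

lemma orthogonal_mat_first_col:
  fixes v :: "real vec"
  assumes v: "v \<in> carrier_vec N" and v0: "v \<noteq> 0\<^sub>v N"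
  obtains W c where "W \<in> carrier_mat N N" "W\<^sup>T * W = 1\<^sub>m N" "col W 0 = c \<cdot>\<^sub>v v"
proof -
  interpret cof_vec_space N "TYPE(real)" .
  note bc = basis_completion[OF v v0]
  define ws where "ws = gram_schmidt N (basis_completion v)"
  have ws: "corthogonal ws" "set ws \<subseteq> carrier_vec N" "length ws = N"
    using gram_schmidt_result[OF bc(2) bc(4) bc(5) ws_def] bc(6) by auto
  have "N \<noteq> 0"
    using v v0 by auto
  then obtain vs where "basis_completion v = v # vs"
    using bc(6) bc(7) by (cases "basis_completion v") auto
  then have "hd ws = v"
    using v by (simp add: ws_def)
  then have ws0: "ws ! 0 = v"
    using ws(3) \<open>N \<noteq> 0\<close> by (cases ws) auto
  have ws_carrier: "ws ! k \<in> carrier_vec N" if "k < N" for k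
    using ws(2,3) that nth_mem by blast
  have ws_orth: "ws ! i \<bullet> ws ! j = 0 \<longleftrightarrow> i \<noteq> j" if "i < N" "j < N" for i j
    using corthogonalD[OF ws(1)] that ws(3) by simp
  define us where "us = map (\<lambda>w. (1 / sqrt (w \<bullet> w)) \<cdot>\<^sub>v w) ws"
  have us: "length us = N" "\<And>i. i < N \<Longrightarrow> us ! i \<in> carrier_vec N"
    using ws(3) ws_carrier by (auto simp: us_def)
  have us_orth: "us ! i \<bullet> us ! j = (if i = j then 1 else 0)" if "i < N" "j < N" for i j
  proof -
    have pos: "ws ! k \<bullet> ws ! k > 0" if "k < N" for k
      using ws_orth[OF that that] conjugate_square_ge_0_vec[of "ws ! k"] by (simp add: less_le)
    have "us ! i \<bullet> us ! j = (1 / sqrt (ws ! i \<bullet> ws ! i)) * (1 / sqrt (ws ! j \<bullet> ws ! j)) * (ws ! i \<bullet> ws ! j)"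
      using that ws(3) ws_carrier[OF that(1)] ws_carrier[OF that(2)]
      by (simp add: us_def smult_scalar_prod_distrib[of _ N] scalar_prod_smult_distrib[of _ N])
    then show ?thesis
      using that ws_orth[OF that] pos[OF that(1)] by (auto simp: real_sqrt_mult[symmetric])
  qed
  define W where "W = mat_of_cols N us"
  have W: "W \<in> carrier_mat N N"
    using mat_of_cols_carrier(1)[of N us] us(1) by (simp add: W_def)
  have col_W: "col W j = us ! j" if "j < N" for j
    using that us by (simp add: W_def)
  have "W\<^sup>T * W = 1\<^sub>m N"
    using W us_orth col_W by (intro eq_matI) auto
  moreover have "col W 0 = (1 / sqrt (v \<bullet> v)) \<cdot>\<^sub>v v"
    using col_W[of 0] \<open>N \<noteq> 0\<close> ws(3) ws0 by (simp add: us_def)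
  ultimately show thesis
    using that W by blast
qed

lemma symmetric_mat_deflation:
  fixes A W :: "real mat"
  assumes A: "A \<in> carrier_mat (Suc m) (Suc m)" and sym: "A\<^sup>T = A"
    and W: "W \<in> carrier_mat (Suc m) (Suc m)" and WtW: "W\<^sup>T * W = 1\<^sub>m (Suc m)"
    and eigen: "A *\<^sub>v col W 0 = e \<cdot>\<^sub>v col W 0"
  obtains A' where "A' \<in> carrier_mat m m" "A'\<^sup>T = A'"
    "W\<^sup>T * A * W = four_block_mat (e \<cdot>\<^sub>m 1\<^sub>m 1) (0\<^sub>m 1 m) (0\<^sub>m m 1) A'"
proof -
  define B where "B = W\<^sup>T * A * W"
  have B: "B \<in> carrier_mat (Suc m) (Suc m)"
    using A W by (simp add: B_def)
  have "B\<^sup>T = W\<^sup>T * (W\<^sup>T * A)\<^sup>T"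
    unfolding B_def using A W by (subst transpose_mult[of _ _ "Suc m"]) auto
  also have "\<dots> = B"
    using A W sym by (simp add: B_def transpose_mult[of _ _ "Suc m"] assoc_mult_mat[of _ _ "Suc m" _ "Suc m"])
  finally have symB: "B\<^sup>T = B" .
  have B_col0: "B $$ (i, 0) = (if i = 0 then e else 0)" if "i < Suc m" for i
  proof -
    have "B $$ (i, 0) = col W i \<bullet> (A *\<^sub>v col W 0)"
      unfolding B_def using A W that
      by (simp add: assoc_mult_mat[of _ _ "Suc m" _ "Suc m"] col_mult2[of _ "Suc m" "Suc m"] mult_mat_vec_def)
    also have "\<dots> = e * (W\<^sup>T * W) $$ (i, 0)"
      unfolding eigen using W that by simp
    finally show ?thesis
      using that WtW by simp
  qed
  have B_sym: "B $$ (j, i) = B $$ (i, j)" if "i < Suc m" "j < Suc m" for i j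
  proof -
    have "B $$ (j, i) = B\<^sup>T $$ (i, j)"
      using B that by simp
    then show ?thesis
      unfolding symB .
  qed
  have B_row0: "B $$ (0, j) = (if j = 0 then e else 0)" if "j < Suc m" for j
    using B_col0[OF that] B_sym[OF that] by simp
  define A' where "A' = mat m m (\<lambda>(i, j). B $$ (Suc i, Suc j))"
  have "A' \<in> carrier_mat m m"
    by (simp add: A'_def)
  moreover have "A'\<^sup>T = A'"
    using B_sym by (intro eq_matI) (auto simp: A'_def)
  moreover have "W\<^sup>T * A * W = four_block_mat (e \<cdot>\<^sub>m 1\<^sub>m 1) (0\<^sub>m 1 m) (0\<^sub>m m 1) A'"
    unfolding B_def[symmetric] using B B_col0 B_row0 by (intro eq_matI) (auto simp: A'_def)
  ultimately show thesis
    by (rule that)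
qed

lemma orthogonal_diag_from_block:
  fixes A W U' :: "'a :: field mat"
  assumes A: "A \<in> carrier_mat (Suc m) (Suc m)"
    and W: "W \<in> carrier_mat (Suc m) (Suc m)" and WtW: "W\<^sup>T * W = 1\<^sub>m (Suc m)"
    and U': "U' \<in> carrier_mat m m" "U'\<^sup>T * U' = 1\<^sub>m m"
    and WAW: "W\<^sup>T * A * W = four_block_mat (e \<cdot>\<^sub>m 1\<^sub>m 1) (0\<^sub>m 1 m) (0\<^sub>m m 1) (U' * mat_diag m l * U'\<^sup>T)"
  shows "\<exists>U. U \<in> carrier_mat (Suc m) (Suc m) \<and> U\<^sup>T * U = 1\<^sub>m (Suc m)
    \<and> A = U * mat_diag (Suc m) (case_nat e l) * U\<^sup>T"
proof -
  define P where "P = four_block_mat (1\<^sub>m 1) (0\<^sub>m 1 m) (0\<^sub>m m 1) U'"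
  define D where "D = mat_diag (Suc m) (case_nat e l)"
  note assoc = assoc_mult_mat[of _ "Suc m" "Suc m" _ "Suc m" _ "Suc m"]
  have P: "P \<in> carrier_mat (Suc m) (Suc m)"
    using four_block_carrier_mat[OF one_carrier_mat[of 1] U'(1)] by (simp add: P_def)
  have D: "D \<in> carrier_mat (Suc m) (Suc m)"
    by (simp add: D_def)
  have PtP: "P\<^sup>T * P = 1\<^sub>m (Suc m)"
    unfolding P_def using U' by (simp add: block_diag_transpose block_diag_mult)
  have PDP: "P * D * P\<^sup>T = W\<^sup>T * A * W"
    unfolding WAW P_def D_def mat_diag_Suc using U' by (simp add: block_diag_transpose block_diag_mult)
  have WWt: "W * W\<^sup>T = 1\<^sub>m (Suc m)"
    using mat_mult_left_right_inverse[OF _ W WtW] W by simp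
  have "(W * P)\<^sup>T * (W * P) = P\<^sup>T * (W\<^sup>T * W) * P"
    using W P by (simp add: transpose_mult[OF W P] assoc)
  then have "(W * P)\<^sup>T * (W * P) = 1\<^sub>m (Suc m)"
    using P PtP WtW by simp
  moreover have "(W * P) * D * (W * P)\<^sup>T = A"
  proof -
    have "(W * P) * D * (W * P)\<^sup>T = W * (P * D * P\<^sup>T) * W\<^sup>T"
      using W P D by (simp add: transpose_mult[OF W P] assoc)
    also have "\<dots> = (W * W\<^sup>T) * A * (W * W\<^sup>T)"
      unfolding PDP using W A by (simp add: assoc)
    finally show ?thesis
      using WWt A by simp
  qed
  ultimately show ?thesis
    using W P unfolding D_def by (intro exI[of _ "W * P"]) auto
qed

theorem real_symmetric_spectral:
  fixes A :: "real mat"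
  assumes "A \<in> carrier_mat N N" and "A\<^sup>T = A"
  shows "\<exists>U l. U \<in> carrier_mat N N \<and> U\<^sup>T * U = 1\<^sub>m N \<and> A = U * mat_diag N l * U\<^sup>T"
  using assms
proof (induction N arbitrary: A)
  case 0
  then have "A = 1\<^sub>m 0 * mat_diag 0 l * (1\<^sub>m 0)\<^sup>T" for l
    by (intro eq_matI) auto
  then show ?case
    by fastforce
next
  case (Suc m)
  have A: "A \<in> carrier_mat (Suc m) (Suc m)" and sym: "A\<^sup>T = A"
    using Suc.prems by auto
  obtain e where "eigenvalue A e"
    using real_symmetric_has_eigenvalue[OF A sym] by auto
  then have "eigenvector A (find_eigenvector A e) e"
    using find_eigenvector[OF A] by blast
  then have v: "find_eigenvector A e \<in> carrier_vec (Suc m)" "find_eigenvector A e \<noteq> 0\<^sub>v (Suc m)"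
    and Av: "A *\<^sub>v find_eigenvector A e = e \<cdot>\<^sub>v find_eigenvector A e"
    using A unfolding eigenvector_def by auto
  obtain W c where W: "W \<in> carrier_mat (Suc m) (Suc m)" and WtW: "W\<^sup>T * W = 1\<^sub>m (Suc m)"
    and col_W: "col W 0 = c \<cdot>\<^sub>v find_eigenvector A e"
    using orthogonal_mat_first_col[OF v] by blast
  have "A *\<^sub>v col W 0 = e \<cdot>\<^sub>v col W 0"
    unfolding col_W using A v Av by (metis mult_mat_vec smult_smult_assoc mult.commute)
  then obtain A' where A': "A' \<in> carrier_mat m m" "A'\<^sup>T = A'"
    and WAW: "W\<^sup>T * A * W = four_block_mat (e \<cdot>\<^sub>m 1\<^sub>m 1) (0\<^sub>m 1 m) (0\<^sub>m m 1) A'"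
    using symmetric_mat_deflation[OF A sym W WtW] by blast
  obtain U' l' where U': "U' \<in> carrier_mat m m" "U'\<^sup>T * U' = 1\<^sub>m m"
    and "A' = U' * mat_diag m l' * U'\<^sup>T"
    using Suc.IH[OF A'] by blast
  then have "\<exists>U. U \<in> carrier_mat (Suc m) (Suc m) \<and> U\<^sup>T * U = 1\<^sub>m (Suc m)
    \<and> A = U * mat_diag (Suc m) (case_nat e l') * U\<^sup>T"
    using WAW by (intro orthogonal_diag_from_block[OF A W WtW U']) simp
  then show ?case
    by blast
qed

section \<open>Matrices diagonal in an orthonormal basis\<close>

lemma sum_sq_minus_projection_nonneg:
  fixes x y :: "'a \<Rightarrow> real"
  shows "0 \<le> (\<Sum>k\<in>K. (x k)\<^sup>2) - (\<Sum>k\<in>K. x k * y k)\<^sup>2 / (\<Sum>k\<in>K. (y k)\<^sup>2)"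
proof (cases "(\<Sum>k\<in>K. (y k)\<^sup>2) = 0")
  case False
  then have "(\<Sum>k\<in>K. (y k)\<^sup>2) > 0"
    by (simp add: less_le sum_nonneg)
  then show ?thesis
    using Cauchy_Schwarz_ineq_sum[of x y K] by (simp add: divide_le_eq)
qed (simp add: sum_nonneg)

locale orthonormal_basis =
  fixes N :: nat and V :: "nat \<Rightarrow> nat \<Rightarrow> real"
  assumes orthonormal: "k < N \<Longrightarrow> k' < N \<Longrightarrow> (\<Sum>i<N. V k i * V k' i) = (if k = k' then 1 else 0)"
begin

definition coord :: "(nat \<Rightarrow> real) \<Rightarrow> nat \<Rightarrow> real" where
  "coord f k = (\<Sum>i<N. V k i * f i)"

definition spectral_mat :: "(nat \<Rightarrow> real) \<Rightarrow> nat set \<Rightarrow> nat \<Rightarrow> nat \<Rightarrow> real" where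
  "spectral_mat p K i j = (\<Sum>k\<in>K. p k * V k i * V k j)"

lemma sum_mult_combination:
  "(\<Sum>i<N. g i * (\<Sum>k\<in>K. x k * V k i)) = (\<Sum>k\<in>K. x k * coord g k)"
  unfolding coord_def sum_distrib_left by (subst sum.swap) (simp add: mult_ac)

lemma coord_basis_vec: "k < N \<Longrightarrow> m < N \<Longrightarrow> coord (V m) k = (if k = m then 1 else 0)"
  unfolding coord_def by (simp add: orthonormal)

lemma coord_combination:
  assumes "K \<subseteq> {..<N}" and "m < N"
  shows "coord (\<lambda>i. \<Sum>k\<in>K. x k * V k i) m = (if m \<in> K then x m else 0)"
proof -
  have "coord (\<lambda>i. \<Sum>k\<in>K. x k * V k i) m = (\<Sum>k\<in>K. x k * coord (V m) k)"
    unfolding coord_def[of _ m] by (rule sum_mult_combination)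
  also have "\<dots> = (\<Sum>k\<in>K. if k = m then x m else 0)"
    using assms by (intro sum.cong) (auto simp: coord_basis_vec)
  finally show ?thesis
    using finite_subset[OF assms(1)] by simp
qed

lemma sum_sq_combination:
  assumes "K \<subseteq> {..<N}"
  shows "(\<Sum>i<N. (\<Sum>k\<in>K. x k * V k i)\<^sup>2) = (\<Sum>k\<in>K. (x k)\<^sup>2)"
proof -
  define c where "c i = (\<Sum>k\<in>K. x k * V k i)" for i
  have "(\<Sum>i<N. (c i)\<^sup>2) = (\<Sum>i<N. c i * (\<Sum>k\<in>K. x k * V k i))"
    by (simp add: power2_eq_square c_def)
  also have "\<dots> = (\<Sum>k\<in>K. x k * coord c k)"
    by (rule sum_mult_combination)
  also have "\<dots> = (\<Sum>k\<in>K. (x k)\<^sup>2)"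
    using assms unfolding c_def by (intro sum.cong) (auto simp: coord_combination power2_eq_square subset_iff)
  finally show ?thesis
    by (simp add: c_def)
qed

lemma spectral_mat_apply: "(\<Sum>j<N. spectral_mat p K i j * g j) = (\<Sum>k\<in>K. p k * coord g k * V k i)"
  using sum_mult_combination[of g "\<lambda>k. p k * V k i" K]
  by (simp add: spectral_mat_def sum_distrib_right mult_ac)

lemma spectral_mat_form:
  "(\<Sum>i<N. \<Sum>j<N. f i * spectral_mat p K i j * g j) = (\<Sum>k\<in>K. p k * coord f k * coord g k)"
proof -
  have "(\<Sum>i<N. \<Sum>j<N. f i * spectral_mat p K i j * g j) = (\<Sum>i<N. f i * (\<Sum>j<N. spectral_mat p K i j * g j))"
    by (simp add: sum_distrib_left mult.assoc)
  also have "\<dots> = (\<Sum>i<N. f i * (\<Sum>k\<in>K. (p k * coord g k) * V k i))"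
    by (simp add: spectral_mat_apply)
  also have "\<dots> = (\<Sum>k\<in>K. (p k * coord g k) * coord f k)"
    by (rule sum_mult_combination)
  finally show ?thesis
    by (simp add: mult_ac)
qed

lemma spectral_mat_inner:
  assumes "K \<subseteq> {..<N}" and "L \<subseteq> {..<N}"
  shows "(\<Sum>i<N. \<Sum>j<N. spectral_mat p K i j * spectral_mat q L i j) = (\<Sum>k\<in>K \<inter> L. p k * q k)"
proof -
  have "(\<Sum>i<N. \<Sum>j<N. spectral_mat p K i j * spectral_mat q L i j)
      = (\<Sum>i<N. \<Sum>j<N. \<Sum>k\<in>K. p k * (V k i * spectral_mat q L i j * V k j))"
    unfolding spectral_mat_def[of p] sum_distrib_right by (simp add: mult_ac)
  also have "\<dots> = (\<Sum>k\<in>K. p k * (\<Sum>i<N. \<Sum>j<N. V k i * spectral_mat q L i j * V k j))"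
    unfolding sum_distrib_left by (subst sum.swap, rule sum.cong, simp, rule sum.swap)
  also have "\<dots> = (\<Sum>k\<in>K. if k \<in> L then p k * q k else 0)"
  proof (intro sum.cong refl)
    fix k assume "k \<in> K"
    then have "k < N" using assms(1) by blast
    have "(\<Sum>m\<in>L. q m * coord (V k) m * coord (V k) m) = (\<Sum>m\<in>L. if m = k then q k else 0)"
      using assms(2) \<open>k < N\<close> by (intro sum.cong) (auto simp: coord_basis_vec)
    then show "p k * (\<Sum>i<N. \<Sum>j<N. V k i * spectral_mat q L i j * V k j) = (if k \<in> L then p k * q k else 0)"
      using finite_subset[OF assms(2)] by (simp add: spectral_mat_form)
  qed
  also have "\<dots> = (\<Sum>k\<in>K \<inter> L. p k * q k)"
    using finite_subset[OF assms(1)] by (simp add: sum.inter_restrict)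
  finally show ?thesis .
qed

lemma spectral_mat_trace:
  assumes "K \<subseteq> {..<N}"
  shows "(\<Sum>i<N. spectral_mat p K i i) = (\<Sum>k\<in>K. p k)"
proof -
  have "(\<Sum>i<N. spectral_mat p K i i) = (\<Sum>k\<in>K. p k * (\<Sum>i<N. V k i * V k i))"
    unfolding spectral_mat_def sum_distrib_left by (subst sum.swap) (simp add: mult.assoc)
  also have "\<dots> = (\<Sum>k\<in>K. p k)"
    using assms by (intro sum.cong) (auto simp: orthonormal)
  finally show ?thesis .
qed

definition top_square :: "(nat \<Rightarrow> real) \<Rightarrow> nat \<Rightarrow> nat \<Rightarrow> nat \<Rightarrow> real" where
  "top_square l n = spectral_mat (\<lambda>k. (l k)\<^sup>2) {..<n}"

definition top_square_ones :: "(nat \<Rightarrow> real) \<Rightarrow> nat \<Rightarrow> nat \<Rightarrow> real" where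
  "top_square_ones l n i = (\<Sum>j<N. top_square l n i j)"

text \<open>With \<open>B = top_square l n\<close>, \<open>top_square_ones l n\<close> is \<open>B 1\<close> and \<open>deflated_top_square l n\<close>
  is the matrix \<open>X\<close> of the proof idea without the factor \<open>1 / \<Delta>\<close>.\<close>

definition deflated_top_square :: "(nat \<Rightarrow> real) \<Rightarrow> nat \<Rightarrow> nat \<Rightarrow> nat \<Rightarrow> real" where
  "deflated_top_square l n i j = top_square l n i j
     - top_square_ones l n i * top_square_ones l n j / (\<Sum>i<N. top_square_ones l n i)"

lemma deflated_top_square_sym: "deflated_top_square l n j i = deflated_top_square l n i j"
  by (simp add: deflated_top_square_def top_square_def spectral_mat_def mult_ac)

lemma top_square_ones_eq:
  "top_square_ones l n i = (\<Sum>k<n. ((l k)\<^sup>2 * coord (\<lambda>_. 1) k) * V k i)"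
  using spectral_mat_apply[of "\<lambda>k. (l k)\<^sup>2" "{..<n}" i "\<lambda>_. 1"]
  by (simp add: top_square_ones_def top_square_def)

lemma sum_mult_top_square_ones:
  "(\<Sum>i<N. f i * top_square_ones l n i) = (\<Sum>k<n. (l k * coord f k) * (l k * coord (\<lambda>_. 1) k))"
  unfolding top_square_ones_eq sum_mult_combination by (simp add: power2_eq_square mult_ac)

lemma deflated_top_square_form:
  "(\<Sum>i<N. \<Sum>j<N. f i * deflated_top_square l n i j * f j)
   = (\<Sum>k<n. (l k * coord f k)\<^sup>2)
     - (\<Sum>k<n. (l k * coord f k) * (l k * coord (\<lambda>_. 1) k))\<^sup>2 / (\<Sum>k<n. (l k * coord (\<lambda>_. 1) k)\<^sup>2)"
proof -
  have ones: "(\<Sum>i<N. top_square_ones l n i) = (\<Sum>k<n. (l k * coord (\<lambda>_. 1) k)\<^sup>2)"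
    using sum_mult_top_square_ones[of "\<lambda>_. 1"] by (simp add: power2_eq_square)
  have "(\<Sum>i<N. \<Sum>j<N. f i * deflated_top_square l n i j * f j)
      = (\<Sum>i<N. \<Sum>j<N. f i * top_square l n i j * f j)
        - (\<Sum>i<N. f i * top_square_ones l n i) * (\<Sum>j<N. f j * top_square_ones l n j)
          / (\<Sum>i<N. top_square_ones l n i)"
    unfolding deflated_top_square_def
    by (simp add: algebra_simps sum_subtractf sum_distrib_left sum_distrib_right sum_divide_distrib)
  then show ?thesis
    unfolding ones sum_mult_top_square_ones top_square_def spectral_mat_form
    by (simp add: power2_eq_square mult_ac)
qed

lemma deflated_top_square_form_nonneg: "0 \<le> (\<Sum>i<N. \<Sum>j<N. f i * deflated_top_square l n i j * f j)"
  unfolding deflated_top_square_form by (rule sum_sq_minus_projection_nonneg)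

lemma deflated_top_square_form_ones: "(\<Sum>i<N. \<Sum>j<N. deflated_top_square l n i j) = 0"
  using deflated_top_square_form[of "\<lambda>_. 1"] by (simp add: power2_eq_square)

lemma deflated_top_square_diag_le:
  assumes "n \<le> N" and "i < N"
  shows "deflated_top_square l n i i \<le> (\<Sum>j<N. (spectral_mat l {..<N} i j)\<^sup>2)"
proof -
  have "0 \<le> (\<Sum>i<N. top_square_ones l n i)"
    using sum_mult_top_square_ones[of "\<lambda>_. 1"] by (simp add: sum_nonneg)
  then have "deflated_top_square l n i i \<le> top_square l n i i"
    unfolding deflated_top_square_def by (simp add: power2_eq_square[symmetric])
  also have "\<dots> = (\<Sum>k<n. (l k * V k i)\<^sup>2)"
    by (simp add: top_square_def spectral_mat_def power2_eq_square mult_ac)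
  also have "\<dots> \<le> (\<Sum>k<N. (l k * V k i)\<^sup>2)"
    using assms(1) by (intro sum_mono2) auto
  also have "\<dots> = (\<Sum>j<N. (spectral_mat l {..<N} i j)\<^sup>2)"
    using sum_sq_combination[of "{..<N}" "\<lambda>k. l k * V k i"] by (simp add: spectral_mat_def mult_ac)
  finally show ?thesis .
qed

lemma deflated_top_square_inner:
  assumes "n \<le> N"
  shows "(\<Sum>i<N. \<Sum>j<N. deflated_top_square l n i j * spectral_mat l {..<N} i j)
    = (\<Sum>k<n. (l k)^3) - (\<Sum>k<n. (l k * coord (\<lambda>_. 1) k)\<^sup>2 * (l k)^3) / (\<Sum>k<n. (l k * coord (\<lambda>_. 1) k)\<^sup>2)"
proof -
  let ?r = "top_square_ones l n"
  have ones: "(\<Sum>i<N. ?r i) = (\<Sum>k<n. (l k * coord (\<lambda>_. 1) k)\<^sup>2)"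
    using sum_mult_top_square_ones[of "\<lambda>_. 1"] by (simp add: power2_eq_square)
  have coord_r: "coord ?r k = (if k < n then (l k)\<^sup>2 * coord (\<lambda>_. 1) k else 0)" if "k < N" for k
    unfolding top_square_ones_eq using assms that by (subst coord_combination) auto
  have "(\<Sum>i<N. \<Sum>j<N. top_square l n i j * spectral_mat l {..<N} i j) = (\<Sum>k<n. (l k)^3)"
    using assms unfolding top_square_def
    by (subst spectral_mat_inner) (auto simp: power2_eq_square power3_eq_cube Int_absorb2)
  moreover have "(\<Sum>i<N. \<Sum>j<N. ?r i * ?r j * spectral_mat l {..<N} i j)
      = (\<Sum>k<n. (l k * coord (\<lambda>_. 1) k)\<^sup>2 * (l k)^3)"
  proof -
    have "(\<Sum>i<N. \<Sum>j<N. ?r i * ?r j * spectral_mat l {..<N} i j) = (\<Sum>k<N. l k * coord ?r k * coord ?r k)"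
      by (subst spectral_mat_form[symmetric]) (simp add: mult_ac)
    also have "\<dots> = (\<Sum>k<N. if k < n then (l k * coord (\<lambda>_. 1) k)\<^sup>2 * (l k)^3 else 0)"
      by (intro sum.cong) (auto simp: coord_r power2_eq_square power3_eq_cube)
    also have "\<dots> = (\<Sum>k<n. (l k * coord (\<lambda>_. 1) k)\<^sup>2 * (l k)^3)"
      using assms by (intro sum.mono_neutral_cong_right) auto
    finally show ?thesis .
  qed
  moreover have "(\<Sum>i<N. \<Sum>j<N. deflated_top_square l n i j * spectral_mat l {..<N} i j)
      = (\<Sum>i<N. \<Sum>j<N. top_square l n i j * spectral_mat l {..<N} i j)
        - (\<Sum>i<N. \<Sum>j<N. ?r i * ?r j * spectral_mat l {..<N} i j) / (\<Sum>i<N. ?r i)"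
    unfolding deflated_top_square_def left_diff_distrib sum_subtractf sum_divide_distrib
    by (simp add: mult_ac)
  ultimately show ?thesis
    unfolding ones by simp
qed

lemma deflated_top_square_inner_ge:
  assumes "n \<le> N" and "0 < n" and "0 \<le> l 0" and "\<And>k. k < n \<Longrightarrow> l k \<le> l 0"
  shows "(\<Sum>k\<in>{1..<n}. (l k)^3) \<le> (\<Sum>i<N. \<Sum>j<N. deflated_top_square l n i j * spectral_mat l {..<N} i j)"
proof -
  \<comment> \<open>the subtracted term is the average of the \<open>l k ^ 3\<close> with weights \<open>w k\<close>\<close>
  define w where "w k = (l k * coord (\<lambda>_. 1) k)\<^sup>2" for k
  have "(\<Sum>k<n. w k * (l k)^3) \<le> (\<Sum>k<n. w k * (l 0)^3)"
    using assms(4) by (intro sum_mono mult_left_mono power_mono_odd) (auto simp: w_def)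
  also have "\<dots> = (l 0)^3 * (\<Sum>k<n. w k)"
    by (simp add: sum_distrib_right mult.commute)
  finally have "(\<Sum>k<n. w k * (l k)^3) / (\<Sum>k<n. w k) \<le> (l 0)^3"
    using assms(3) sum_nonneg[of "{..<n}" w] by (cases "(\<Sum>k<n. w k) = 0") (auto simp: divide_le_eq w_def)
  moreover have "(\<Sum>k<n. (l k)^3) = (l 0)^3 + (\<Sum>k\<in>{1..<n}. (l k)^3)"
    using assms(2) by (simp add: lessThan_atLeast0 sum.atLeast_Suc_lessThan)
  ultimately show ?thesis
    using assms(1) unfolding deflated_top_square_inner[OF assms(1)] w_def by simp
qed

end

section \<open>Sorted eigenvalues\<close>

lemma char_poly_orthogonal_diag:
  fixes A U :: "'a :: field mat"
  assumes U: "U \<in> carrier_mat N N" and UtU: "U\<^sup>T * U = 1\<^sub>m N" and A: "A = U * mat_diag N l * U\<^sup>T"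
  shows "char_poly A = (\<Prod>k\<leftarrow>[0..<N]. [:- l k, 1:])"
proof -
  have "U * U\<^sup>T = 1\<^sub>m N"
    using mat_mult_left_right_inverse[OF _ U UtU] U by simp
  then have "similar_mat A (mat_diag N l)"
    unfolding similar_mat_def similar_mat_wit_def using U UtU A
    by (intro exI[of _ U] exI[of _ "U\<^sup>T"]) (auto simp: Let_def)
  then have "char_poly A = char_poly (mat_diag N l)"
    by (rule char_poly_similar)
  also have "\<dots> = (\<Prod>a\<leftarrow>diag_mat (mat_diag N l). [:- a, 1:])"
    by (rule char_poly_upper_triangular[of _ N]) (auto simp: upper_triangular_def mat_diag_def)
  also have "diag_mat (mat_diag N l) = map l [0..<N]"
    by (simp add: diag_mat_def mat_diag_def)
  finally show ?thesis
    by (simp add: comp_def)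
qed

lemma mset_eigenvalues_desc:
  fixes A U :: "real mat"
  assumes "U \<in> carrier_mat N N" and "U\<^sup>T * U = 1\<^sub>m N" and "A = U * mat_diag N l * U\<^sup>T"
  shows "mset (eigenvalues_desc A) = mset (map l [0..<N])"
proof -
  have "(\<Sum>k\<leftarrow>xs. {#l k#}) = mset (map l xs)" for xs
    by (induction xs) auto
  then have "proots (\<Prod>k\<leftarrow>[0..<N]. [:- l k, 1:]) = mset (map l [0..<N])"
    using proots_prod_list[of "map (\<lambda>k. [:- l k, 1:]) [0..<N]"] by (auto simp: comp_def image_iff)
  then show ?thesis
    unfolding eigenvalues_desc_def char_poly_orthogonal_diag[OF assms] by simp
qed

lemma orthogonal_diag_entry:
  fixes U :: "'a :: comm_ring_1 mat"
  assumes "U \<in> carrier_mat N N" and "i < N" and "j < N"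
  shows "(U * mat_diag N l * U\<^sup>T) $$ (i, j) = (\<Sum>k<N. U $$ (i, k) * l k * U $$ (j, k))"
  using assms by (simp add: mat_diag_mult_right[of _ N N] scalar_prod_def lessThan_atLeast0)

theorem symmetric_mat_sorted_eigen_expansion:
  fixes A :: "real mat"
  assumes A: "A \<in> carrier_mat N N" and sym: "A\<^sup>T = A"
  obtains V where "orthonormal_basis N V" and "length (eigenvalues_desc A) = N"
    and "\<And>i j. i < N \<Longrightarrow> j < N \<Longrightarrow> A $$ (i, j) = (\<Sum>k<N. eigenvalues_desc A ! k * V k i * V k j)"
proof -
  obtain U l where U: "U \<in> carrier_mat N N" and UtU: "U\<^sup>T * U = 1\<^sub>m N"
    and A_eq: "A = U * mat_diag N l * U\<^sup>T"
    using real_symmetric_spectral[OF A sym] by blast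
  have mset_eq: "mset (eigenvalues_desc A) = mset (map l [0..<N])"
    by (rule mset_eigenvalues_desc[OF U UtU A_eq])
  then obtain p where p: "p permutes {..<N}" and "permute_list p (map l [0..<N]) = eigenvalues_desc A"
    using mset_eq_permutation by (metis length_map length_upt minus_nat.diff_0)
  then have eig: "eigenvalues_desc A ! k = l (p k)" if "k < N" for k
    using that permute_list_nth[of p "map l [0..<N]" k] permutes_in_image[OF p] by auto
  have length: "length (eigenvalues_desc A) = N"
    using arg_cong[OF mset_eq, of size] by simp
  define V where "V k i = U $$ (i, p k)" for k i
  have "orthonormal_basis N V"
  proof
    fix k k' assume "k < N" "k' < N"
    then have "(\<Sum>i<N. V k i * V k' i) = (U\<^sup>T * U) $$ (p k, p k')"
      using U permutes_in_image[OF p] by (simp add: V_def scalar_prod_def lessThan_atLeast0)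
    then show "(\<Sum>i<N. V k i * V k' i) = (if k = k' then 1 else 0)"
      using UtU \<open>k < N\<close> \<open>k' < N\<close> permutes_in_image[OF p] permutes_inj[OF p]
      by (auto dest: injD)
  qed
  moreover have "A $$ (i, j) = (\<Sum>k<N. eigenvalues_desc A ! k * V k i * V k j)" if "i < N" "j < N" for i j
  proof -
    have "A $$ (i, j) = (\<Sum>m<N. U $$ (i, m) * l m * U $$ (j, m))"
      unfolding A_eq using U that by (rule orthogonal_diag_entry)
    also have "\<dots> = (\<Sum>k<N. U $$ (i, p k) * l (p k) * U $$ (j, p k))"
      by (subst sum.permute[OF p]) (simp add: comp_def)
    finally show ?thesis
      by (simp add: V_def eig mult_ac)
  qed
  ultimately show thesis
    using that length by blast
qed

section \<open>Positive semidefinite matrices and discrepancy\<close>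

lemma quadratic_form_sum:
  fixes X :: "'a :: comm_ring mat"
  assumes "X \<in> carrier_mat N N" and "v \<in> carrier_vec N"
  shows "v \<bullet> (X *\<^sub>v v) = (\<Sum>i<N. \<Sum>j<N. v $ i * X $$ (i, j) * v $ j)"
  using assms by (simp add: scalar_prod_def mult_mat_vec_def row_def lessThan_atLeast0 sum_distrib_left mult.assoc)

lemma psd_form_nonneg:
  assumes "psd N X"
  shows "0 \<le> (\<Sum>i<N. \<Sum>j<N. f i * X $$ (i, j) * f j)"
proof -
  have "X \<in> carrier_mat N N" and "0 \<le> vec N f \<bullet> (X *\<^sub>v vec N f)"
    using assms unfolding psd_def by auto
  then show ?thesis
    by (simp add: quadratic_form_sum)
qed

lemma psdI_form:
  assumes X: "X \<in> carrier_mat N N" and "X\<^sup>T = X"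
    and form: "\<And>f. 0 \<le> (\<Sum>i<N. \<Sum>j<N. f i * X $$ (i, j) * f j)"
  shows "psd N X"
  unfolding psd_def
proof (intro conjI ballI X assms(2))
  fix v :: "real vec"
  assume "v \<in> carrier_vec N"
  then show "0 \<le> v \<bullet> (X *\<^sub>v v)"
    using X form[of "\<lambda>i. v $ i"] by (simp add: quadratic_form_sum)
qed

lemma sum_indicator_pair:
  fixes g :: "nat \<Rightarrow> real"
  assumes "i < N" "j < N"
  shows "(\<Sum>b<N. g b * (of_bool (b = i) + s * of_bool (b = j))) = g i + s * g j"
  using assms by (simp add: distrib_left sum.distrib mult.left_commute[of _ s] sum_distrib_left[symmetric])

lemma psd_entry_abs_le:
  assumes psd: "psd N X" and diag: "\<forall>i<N. X $$ (i, i) \<le> 1" and "i < N" "j < N"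
  shows "\<bar>X $$ (i, j)\<bar> \<le> 1"
proof -
  have X: "X \<in> carrier_mat N N" and "X\<^sup>T = X"
    using psd unfolding psd_def by auto
  then have sym: "X $$ (j, i) = X $$ (i, j)"
    using \<open>i < N\<close> \<open>j < N\<close> by (metis carrier_matD index_transpose_mat(1))
  have form: "0 \<le> X $$ (i, i) + 2 * s * X $$ (i, j) + s\<^sup>2 * X $$ (j, j)" for s
  proof -
    define f where "f k = of_bool (k = i) + s * of_bool (k = j)" for k
    have "(\<Sum>a<N. \<Sum>b<N. f a * X $$ (a, b) * f b) = (\<Sum>a<N. f a * (X $$ (a, i) + s * X $$ (a, j)))"
      using \<open>i < N\<close> \<open>j < N\<close> unfolding f_def by (simp add: mult.assoc sum_distrib_left[symmetric] sum_indicator_pair)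
    also have "\<dots> = X $$ (i, i) + 2 * s * X $$ (i, j) + s\<^sup>2 * X $$ (j, j)"
      using \<open>i < N\<close> \<open>j < N\<close> sum_indicator_pair[of i N j "\<lambda>a. X $$ (a, i) + s * X $$ (a, j)" s]
      unfolding f_def by (simp add: sym algebra_simps power2_eq_square)
    finally show ?thesis
      using psd_form_nonneg[OF psd, of f] by simp
  qed
  have "X $$ (i, i) \<le> 1" "X $$ (j, j) \<le> 1"
    using diag \<open>i < N\<close> \<open>j < N\<close> by auto
  then show ?thesis
    using form[of 1] form[of "-1"] unfolding abs_le_iff by simp
qed

lemma disc_le_pdisc:
  assumes "psd (2 * n) X" and "\<forall>i<2 * n. X $$ (i, i) \<le> 1"
  shows "disc n M X \<le> pdisc n M"
proof -
  define C where "C i j = symmetrization n M $$ (i, j) - density n M * bip_complete n $$ (i, j)" for i j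
  have disc_eq: "disc n M Y = (\<Sum>i<2 * n. \<Sum>j<2 * n. Y $$ (i, j) * C i j)" for Y
    unfolding disc_def entry_inner_def C_def by (simp add: algebra_simps sum_subtractf sum_distrib_left)
  have "disc n M Y \<le> (\<Sum>i<2 * n. \<Sum>j<2 * n. \<bar>C i j\<bar>)"
    if "psd (2 * n) Y" "\<forall>i<2 * n. Y $$ (i, i) \<le> 1" for Y
  proof -
    have "Y $$ (i, j) * C i j \<le> \<bar>C i j\<bar>" if "i < 2 * n" "j < 2 * n" for i j
    proof -
      have "Y $$ (i, j) * C i j \<le> \<bar>Y $$ (i, j)\<bar> * \<bar>C i j\<bar>"
        by (simp add: abs_mult[symmetric])
      also have "\<dots> \<le> \<bar>C i j\<bar>"
        using psd_entry_abs_le[OF \<open>psd (2 * n) Y\<close> \<open>\<forall>i<2 * n. Y $$ (i, i) \<le> 1\<close> that]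
        by (simp add: mult_left_le_one_le)
      finally show ?thesis .
    qed
    then show ?thesis
      unfolding disc_eq by (intro sum_mono) auto
  qed
  then have "bdd_above {disc n M X | X. psd (2 * n) X \<and> (\<forall>i<2 * n. X $$ (i, i) \<le> 1)}"
    by (intro bdd_aboveI) blast
  then show ?thesis
    unfolding pdisc_def using assms by (intro cSup_upper) blast+
qed

lemma entry_inner_le_disc:
  assumes "psd (2 * n) X" and "(\<Sum>i<2 * n. \<Sum>j<2 * n. X $$ (i, j)) = 0"
  shows "entry_inner (2 * n) X (symmetrization n M) \<le> disc n M X"
proof -
  define b where "b i = (if i < n then 1 else - 1 :: real)" for i
  have "X $$ (i, j) * bip_complete n $$ (i, j) = (X $$ (i, j) - b i * X $$ (i, j) * b j) / 2"
    if "i < 2 * n" "j < 2 * n" for i j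
    using that by (simp add: bip_complete_def b_def)
  then have "entry_inner (2 * n) X (bip_complete n)
      = (\<Sum>i<2 * n. \<Sum>j<2 * n. (X $$ (i, j) - b i * X $$ (i, j) * b j) / 2)"
    unfolding entry_inner_def by (intro sum.cong refl) simp
  also have "\<dots> = ((\<Sum>i<2 * n. \<Sum>j<2 * n. X $$ (i, j)) - (\<Sum>i<2 * n. \<Sum>j<2 * n. b i * X $$ (i, j) * b j)) / 2"
    by (simp add: sum_subtractf flip: sum_divide_distrib)
  also have "\<dots> \<le> 0"
    using assms(2) psd_form_nonneg[OF assms(1), of b] by simp
  finally have "entry_inner (2 * n) X (bip_complete n) \<le> 0" .
  moreover have "0 \<le> density n M"
    by (simp add: density_def)
  ultimately show ?thesis
    unfolding disc_def by (simp add: mult_nonneg_nonpos)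
qed

section \<open>The symmetrization\<close>

lemma symmetrization_carrier: "symmetrization n M \<in> carrier_mat (2 * n) (2 * n)"
  by (simp add: symmetrization_def)

lemma symmetrization_transpose: "(symmetrization n M)\<^sup>T = symmetrization n M"
  by (intro eq_matI) (auto simp: symmetrization_def)

lemma trace_symmetrization: "(\<Sum>i<2 * n. symmetrization n M $$ (i, i)) = 0"
  by (intro sum.neutral) (auto simp: symmetrization_def)

lemma sum_lessThan_double:
  fixes g :: "nat \<Rightarrow> 'a :: comm_monoid_add"
  shows "(\<Sum>j<2 * n. g j) = (\<Sum>j<n. g j) + (\<Sum>j<n. g (j + n))"
  by (simp add: mult_2 lessThan_atLeast0 sum.atLeastLessThan_concat[of 0 n "n + n", symmetric]
      sum.shift_bounds_nat_ivl[of g 0 n n, simplified])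

lemma sum_sq_zero_one:
  fixes f :: "'a \<Rightarrow> real"
  assumes "finite S" and "\<And>j. j \<in> S \<Longrightarrow> f j = 0 \<or> f j = 1"
  shows "(\<Sum>j\<in>S. (f j)\<^sup>2) = card {j \<in> S. f j = 1}"
proof -
  have "(\<Sum>j\<in>S. (f j)\<^sup>2) = (\<Sum>j\<in>S. if f j = 1 then 1 else 0)"
    using assms(2) by (intro sum.cong) auto
  then show ?thesis
    using assms(1) by (simp add: sum.If_cases Int_def conj_commute)
qed

lemma row_count_le_max_degree:
  "i < n \<Longrightarrow> card {j. j < n \<and> M $$ (i, j) = 1} \<le> max_degree n M"
  unfolding max_degree_def by (rule Max_ge) auto

lemma col_count_le_max_degree:
  "j < n \<Longrightarrow> card {i. i < n \<and> M $$ (i, j) = 1} \<le> max_degree n M"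
  unfolding max_degree_def by (rule Max_ge) auto

lemma max_degree_pos:
  assumes "i < n" "j < n" "M $$ (i, j) = 1"
  shows "0 < max_degree n M"
proof -
  have "0 < card {j. j < n \<and> M $$ (i, j) = 1}"
    using assms by (subst card_gt_0_iff) auto
  then show ?thesis
    using row_count_le_max_degree[OF assms(1), of M] by linarith
qed

lemma sum_sq_symmetrization_row_le:
  assumes M: "zero_one_mat n M" and i: "i < 2 * n"
  shows "(\<Sum>j<2 * n. (symmetrization n M $$ (i, j))\<^sup>2) \<le> real (max_degree n M)"
proof (cases "i < n")
  case True
  have "(\<Sum>j<2 * n. (symmetrization n M $$ (i, j))\<^sup>2) = (\<Sum>j<n. (M $$ (i, j))\<^sup>2)"
    using i True by (simp add: sum_lessThan_double symmetrization_def)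
  also have "\<dots> = card {j. j < n \<and> M $$ (i, j) = 1}"
    using M True unfolding zero_one_mat_def by (subst sum_sq_zero_one) auto
  finally show ?thesis
    using row_count_le_max_degree[OF True] by simp
next
  case False
  have "(\<Sum>j<2 * n. (symmetrization n M $$ (i, j))\<^sup>2) = (\<Sum>j<n. (M $$ (j, i - n))\<^sup>2)"
    using i False by (simp add: sum_lessThan_double symmetrization_def)
  also have "\<dots> = card {j. j < n \<and> M $$ (j, i - n) = 1}"
    using M i False unfolding zero_one_mat_def by (subst sum_sq_zero_one) auto
  finally show ?thesis
    using col_count_le_max_degree[of "i - n" n M] i False by simp
qed

lemma (in orthonormal_basis) pdisc_ge_deflated_top_square:
  assumes N: "N = 2 * n" and "0 < n"
    and A: "\<And>i j. i < N \<Longrightarrow> j < N \<Longrightarrow> symmetrization n M $$ (i, j) = spectral_mat l {..<N} i j"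
    and D: "0 < D" and rows: "\<And>i. i < N \<Longrightarrow> (\<Sum>j<N. (spectral_mat l {..<N} i j)\<^sup>2) \<le> D"
    and "0 \<le> l 0" and "\<And>k. k < n \<Longrightarrow> l k \<le> l 0"
  shows "(\<Sum>k\<in>{1..<n}. (l k)^3) / D \<le> pdisc n M"
proof -
  define X where "X = mat N N (\<lambda>(i, j). deflated_top_square l n i j / D)"
  have X: "X \<in> carrier_mat N N"
    by (simp add: X_def)
  have form: "(\<Sum>i<N. \<Sum>j<N. f i * X $$ (i, j) * f j)
      = (\<Sum>i<N. \<Sum>j<N. f i * deflated_top_square l n i j * f j) / D" for f
    by (simp add: X_def sum_divide_distrib)
  have psd: "psd N X"
  proof (rule psdI_form[OF X])
    show "X\<^sup>T = X"
      by (intro eq_matI) (auto simp: X_def deflated_top_square_sym)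
  qed (use form deflated_top_square_form_nonneg D in simp)
  have diag: "X $$ (i, i) \<le> 1" if "i < N" for i
  proof -
    have "deflated_top_square l n i i \<le> D"
      using deflated_top_square_diag_le[of n i l] rows[OF that] N that by simp
    then show ?thesis
      using D that by (simp add: X_def)
  qed
  have "(\<Sum>i<N. \<Sum>j<N. X $$ (i, j)) = 0"
    using form[of "\<lambda>_. 1"] deflated_top_square_form_ones by simp
  have "(\<Sum>k\<in>{1..<n}. (l k)^3) / D
      \<le> (\<Sum>i<N. \<Sum>j<N. deflated_top_square l n i j * spectral_mat l {..<N} i j) / D"
    using assms N by (intro divide_right_mono deflated_top_square_inner_ge) auto
  also have "\<dots> = entry_inner N X (symmetrization n M)"
    unfolding entry_inner_def by (simp add: X_def A sum_divide_distrib)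
  also have "\<dots> \<le> disc n M X"
    using entry_inner_le_disc psd \<open>(\<Sum>i<N. \<Sum>j<N. X $$ (i, j)) = 0\<close> N by blast
  also have "\<dots> \<le> pdisc n M"
    using disc_le_pdisc psd diag N by blast
  finally show ?thesis .
qed

theorem lemma3p2:
  fixes n :: nat and M :: "real mat"
  assumes "zero_one_mat n M"
    and "\<exists>i<n. \<exists>j<n. M $$ (i,j) = 1"
  shows "pdisc n M \<ge>
    (1 / real (max_degree n M)) *
      (\<Sum>i\<in>{2..n}. (eigenvalues_desc (symmetrization n M) ! (i - 1)) ^ 3)"
proof -
  define A where "A = symmetrization n M"
  obtain V where V: "orthonormal_basis (2 * n) V" and length: "length (eigenvalues_desc A) = 2 * n"
    and A_eq: "\<And>i j. i < 2 * n \<Longrightarrow> j < 2 * n \<Longrightarrow>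
      A $$ (i, j) = (\<Sum>k<2 * n. eigenvalues_desc A ! k * V k i * V k j)"
    using symmetric_mat_sorted_eigen_expansion[OF symmetrization_carrier[of n M] symmetrization_transpose]
    unfolding A_def by blast
  interpret orthonormal_basis "2 * n" V
    by (rule V)
  define l where "l = (\<lambda>k. eigenvalues_desc A ! k)"
  have A_spectral: "A $$ (i, j) = spectral_mat l {..<2 * n} i j" if "i < 2 * n" "j < 2 * n" for i j
    using A_eq[OF that] by (simp add: spectral_mat_def l_def)
  obtain i j where "i < n" "j < n" "M $$ (i, j) = 1"
    using assms(2) by blast
  then have "0 < n" and D: "0 < max_degree n M"
    using max_degree_pos by auto
  have top: "l k \<le> l 0" if "k < 2 * n" for k
    using sorted_rev_nth_mono[of "eigenvalues_desc A" 0 k] that length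
    by (simp add: l_def eigenvalues_desc_def)
  have "(\<Sum>k<2 * n. l k) = 0"
    using trace_symmetrization[of n M] A_spectral spectral_mat_trace[of "{..<2 * n}" l] by (simp add: A_def)
  then have "0 \<le> l 0"
    using sum_mono[of "{..<2 * n}" l "\<lambda>_. l 0"] top \<open>0 < n\<close> by (simp add: zero_le_mult_iff)
  then have "(\<Sum>k\<in>{1..<n}. (l k)^3) / real (max_degree n M) \<le> pdisc n M"
    using A_spectral top D \<open>0 < n\<close> sum_sq_symmetrization_row_le[OF assms(1)]
    by (intro pdisc_ge_deflated_top_square) (auto simp: A_def)
  moreover have "(\<Sum>i\<in>{2..n}. (l (i - 1))^3) = (\<Sum>k\<in>{1..<n}. (l k)^3)"
    by (rule sum.reindex_bij_witness[of _ Suc "\<lambda>i. i - 1"]) auto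
  ultimately show ?thesis
    by (simp add: l_def A_def)
qed

end
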